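(* Let $2<p<\infty$ and let $\mathcal{U}$ be a nonprincipal ultrafilter on $\mathbb{N}$. Let $M=\{(f_n)_{n,\mathcal{U}}\in(L^{p})^{\mathcal{U}}:\lim_{n,\mathcal{U}}\|f_n\|_2=0\}$. Then $R[(f_n)_{n,\mathcal{U}}]\in M$ for every $(f_n)_{n,\mathcal{U}}\in(L^{p})^{\mathcal{U}}$, and $R[(f_n)_{n,\mathcal{U}}]=(f_n)_{n,\mathcal{U}}$ for every $(f_n)_{n,\mathcal{U}}\in M$; hence $M$ is the range of $R$.
   Context: $L^{p}=L^{p}([0,1],\mu)$, $\mu$ Lebesgue measure ($L^p\subset L^2$ for $p>2$). $(L^{p})^{\mathcal{U}}$ is the ultrapower of $L^p$ and $(f_n)_{n,\mathcal{U}}$ the class of a bounded sequence. $R$ is the projection on $(L^{p})^{\mathcal{U}}$ given by $R[(f_n)_{n,\mathcal{U}}]=\lim_{r\to\infty}(f_nI(|f_n|>r))_{n,\mathcal{U}}$ (norm limit), with $I(|f|>r)$ the indicator of $\{|f|>r\}$. *)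

theory Defs
  imports "HOL-Analysis.Analysis"
begin

definition ultrafilter_nat :: "nat filter \<Rightarrow> bool" where
  "ultrafilter_nat U \<longleftrightarrow> U \<noteq> bot \<and> (\<forall>P. eventually P U \<or> eventually (\<lambda>n. \<not> P n) U)"

definition nonprincipal :: "nat filter \<Rightarrow> bool" where
  "nonprincipal U \<longleftrightarrow> (\<forall>m. eventually (\<lambda>n. n \<noteq> m) U)"

text \<open>L^p([0,1]) with Lebesgue measure (real-valued functions; elements are
  representatives, equality a.e. is handled through the seminorm).\<close>
abbreviation I01 :: "real measure" where
  "I01 \<equiv> lebesgue_on {0..1}"

definition memLp :: "real \<Rightarrow> (real \<Rightarrow> real) \<Rightarrow> bool" where
  "memLp p f \<longleftrightarrow> f \<in> borel_measurable I01 \<and> integrable I01 (\<lambda>x. \<bar>f x\<bar> powr p)"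

definition Lp_norm :: "real \<Rightarrow> (real \<Rightarrow> real) \<Rightarrow> real" where
  "Lp_norm p f = (LINT x|I01. \<bar>f x\<bar> powr p) powr (1 / p)"

text \<open>A representative of an element of the ultrapower: a bounded sequence in L^p.\<close>
definition up_seq :: "real \<Rightarrow> (nat \<Rightarrow> real \<Rightarrow> real) \<Rightarrow> bool" where
  "up_seq p F \<longleftrightarrow> (\<forall>n. memLp p (F n)) \<and> bounded (range (\<lambda>n. Lp_norm p (F n)))"

definition up_dist :: "real \<Rightarrow> nat filter \<Rightarrow> (nat \<Rightarrow> real \<Rightarrow> real) \<Rightarrow> (nat \<Rightarrow> real \<Rightarrow> real) \<Rightarrow> real" where
  "up_dist p U F G = Lim U (\<lambda>n. Lp_norm p (\<lambda>x. F n x - G n x))"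

definition trunc :: "real \<Rightarrow> (real \<Rightarrow> real) \<Rightarrow> real \<Rightarrow> real" where
  "trunc r f = (\<lambda>x. if \<bar>f x\<bar> > r then f x else 0)"

text \<open>G represents R[F]: the classes of (trunc r (F n))_n converge to the class of G
  in the ultrapower norm as r tends to infinity.\<close>
definition R_rep :: "real \<Rightarrow> nat filter \<Rightarrow> (nat \<Rightarrow> real \<Rightarrow> real) \<Rightarrow> (nat \<Rightarrow> real \<Rightarrow> real) \<Rightarrow> bool" where
  "R_rep p U F G \<longleftrightarrow> up_seq p G \<and>
     ((\<lambda>r. up_dist p U (\<lambda>n. trunc r (F n)) G) \<longlongrightarrow> 0) at_top"

definition in_M :: "nat filter \<Rightarrow> (nat \<Rightarrow> real \<Rightarrow> real) \<Rightarrow> bool" where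
  "in_M U F \<longleftrightarrow> ((\<lambda>n. Lp_norm 2 (F n)) \<longlongrightarrow> 0) U"

end

theory Submission
  imports Defs
begin

text \<open>On \<open>[0,1]\<close> with \<open>p > 2\<close>, the part of \<open>f\<close> above level \<open>r\<close> has \<open>L\<^sup>2\<close> mass at most
  \<open>r\<^bsup>2-p\<^esup> \<integral>|f|\<^sup>p\<close>, while the part below level \<open>r\<close> has \<open>L\<^sup>p\<close> mass at most \<open>r\<^bsup>p-2\<^esup> \<integral>|f|\<^sup>2\<close>.
  The first estimate puts the norm limit of the truncations into \<open>M\<close>; the second shows that
  truncation moves no element of \<open>M\<close>. For the existence of the limit, the masses
  \<open>\<integral>|f\<^sub>n I(|f\<^sub>n| > t)|\<^sup>p\<close> decrease in \<open>t\<close>, so their \<open>U\<close>-limits \<open>\<psi> t\<close> decrease to some \<open>L\<close>.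
  Truncating \<open>f\<^sub>n\<close> at diagonal levels \<open>k\<^sub>n \<rightarrow> \<infinity>\<close> (along \<open>U\<close>) whose masses tend to \<open>L\<close>
  gives a class at distance \<open>(\<psi> r - L)\<^bsup>1/p\<^esup>\<close> from the \<open>r\<close>-truncation, and this tends to \<open>0\<close>.\<close>

section \<open>Limits along ultrafilters on the naturals\<close>

lemma ultrafilter_nat_neq_bot: "ultrafilter_nat U \<Longrightarrow> U \<noteq> bot"
  by (simp add: ultrafilter_nat_def)

text \<open>The limit is the supremum of the levels that the sequence eventually exceeds.\<close>
lemma ultrafilter_nat_tendsto_Lim:
  fixes f :: "nat \<Rightarrow> real"
  assumes U: "ultrafilter_nat U" and bounded: "\<And>n. \<bar>f n\<bar> \<le> C"
  shows "(f \<longlongrightarrow> Lim U f) U"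
proof -
  have nb: "U \<noteq> bot" using U by (rule ultrafilter_nat_neq_bot)
  define S where "S = {c. eventually (\<lambda>n. c \<le> f n) U}"
  have "-C \<in> S"
    using bounded by (auto simp: S_def abs_le_iff minus_le_iff intro!: always_eventually)
  hence ne: "S \<noteq> {}" by auto
  have ub: "c \<le> C" if "c \<in> S" for c
  proof -
    have "eventually (\<lambda>n. c \<le> C) U"
      using that bounded by (auto simp: S_def abs_le_iff elim!: eventually_mono intro: order_trans)
    thus "c \<le> C" using nb by (simp add: eventually_const_iff)
  qed
  have "(f \<longlongrightarrow> Sup S) U"
  proof (rule order_tendstoI)
    fix a assume "a < Sup S"
    then obtain c where "c \<in> S" "a < c" using ne ub by (meson less_cSupE)
    thus "eventually (\<lambda>n. a < f n) U"
      by (auto simp: S_def elim!: eventually_mono)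
  next
    fix a assume "Sup S < a"
    show "eventually (\<lambda>n. f n < a) U"
    proof (rule ccontr)
      assume "\<not> ?thesis"
      hence "eventually (\<lambda>n. \<not> f n < a) U" using U unfolding ultrafilter_nat_def by blast
      hence "a \<in> S" by (auto simp: S_def elim!: eventually_mono)
      hence "a \<le> Sup S" using ub by (meson bdd_aboveI cSup_upper)
      thus False using \<open>Sup S < a\<close> by simp
    qed
  qed
  thus ?thesis using nb by (simp add: tendsto_Lim)
qed

lemma nonprincipal_filterlim_at_top: "nonprincipal U \<Longrightarrow> filterlim (\<lambda>n. n) at_top U"
proof (unfold filterlim_at_top, intro allI)
  fix N :: nat assume "nonprincipal U"
  hence "eventually (\<lambda>n. \<forall>m\<in>{..<N}. n \<noteq> m) U"
    by (intro eventually_ball_finite) (auto simp: nonprincipal_def)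
  thus "eventually (\<lambda>n. N \<le> n) U"
    by (rule eventually_mono) (metis lessThan_iff linorder_not_le)
qed

lemma antimono_tendsto_Inf_at_top:
  fixes f :: "'a::linorder \<Rightarrow> 'b::{conditionally_complete_linorder, linorder_topology}"
  assumes antimono: "\<And>s t. t \<le> s \<Longrightarrow> f s \<le> f t" and bdd: "bdd_below (range f)"
  shows "(f \<longlongrightarrow> Inf (range f)) at_top"
proof (rule decreasing_tendsto)
  show "\<forall>\<^sub>F t in at_top. Inf (range f) \<le> f t" using bdd by (simp add: cInf_lower)
  fix x assume "Inf (range f) < x"
  then obtain t where t: "f t < x" using bdd by (auto simp: cInf_less_iff)
  show "\<forall>\<^sub>F s in at_top. f s < x"
    using eventually_ge_at_top[of t] by (rule eventually_mono) (use t antimono in \<open>blast intro: le_less_trans\<close>)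
qed

text \<open>Diagonal choice: \<open>k n\<close> is one less than the longest initial segment of indices \<open>j \<le> n\<close> at
  which \<open>\<phi> n j\<close> is already \<open>1/(j+1)\<close>-close to \<open>\<psi> j\<close>.\<close>
lemma filterlim_diagonal:
  fixes \<phi> :: "nat \<Rightarrow> nat \<Rightarrow> 'a::metric_space"
  assumes U: "filterlim (\<lambda>n. n) at_top U"
    and pointwise: "\<And>j. ((\<lambda>n. \<phi> n j) \<longlongrightarrow> \<psi> j) U" and lim: "\<psi> \<longlonglongrightarrow> L"
  obtains k :: "nat \<Rightarrow> nat" where "filterlim k at_top U" "((\<lambda>n. \<phi> n (k n)) \<longlongrightarrow> L) U"
proof -
  define good where "good n j \<longleftrightarrow> dist (\<phi> n j) (\<psi> j) < 1 / (real j + 1)" for n j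
  define S where "S n = {m. m \<le> n \<and> (\<forall>j<m. good n j)}" for n
  define k where "k n = Max (S n) - 1" for n
  have S_finite: "finite (S n)" and S_0: "0 \<in> S n" for n by (auto simp: S_def)
  have k_good: "good n (k n)" if "k n < Max (S n)" for n
    using that Max_in[OF S_finite] S_0 by (auto simp: k_def S_def)
  have ev_k: "eventually (\<lambda>n. K \<le> k n \<and> good n (k n)) U" for K
  proof -
    have "eventually (\<lambda>n. Suc K \<le> n \<and> (\<forall>j\<in>{..<Suc K}. good n j)) U"
    proof (intro eventually_conj eventually_ball_finite ballI)
      show "eventually (\<lambda>n. Suc K \<le> n) U" using U by (simp add: filterlim_at_top)
      show "eventually (\<lambda>n. good n j) U" for j
        using tendstoD[OF pointwise[of j], of "1 / (real j + 1)"] by (simp add: good_def)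
    qed simp
    thus ?thesis
    proof (rule eventually_mono)
      fix n assume "Suc K \<le> n \<and> (\<forall>j\<in>{..<Suc K}. good n j)"
      hence "Suc K \<in> S n" by (auto simp: S_def)
      hence "Suc K \<le> Max (S n)" using S_finite by simp
      thus "K \<le> k n \<and> good n (k n)" using k_good by (simp add: k_def)
    qed
  qed
  have "filterlim k at_top U"
    unfolding filterlim_at_top using ev_k by (blast intro: eventually_mono)
  moreover have "((\<lambda>n. \<phi> n (k n)) \<longlongrightarrow> L) U"
  proof (rule tendstoI)
    fix e :: real assume e: "0 < e"
    obtain N where N: "\<And>j. N \<le> j \<Longrightarrow> dist (\<psi> j) L < e / 2"
      using metric_LIMSEQ_D[OF lim, of "e / 2"] e by auto
    obtain M :: nat where M: "1 / (real M + 1) < e / 2"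
      using nat_approx_posE[of "e / 2"] e by (metis add.commute half_gt_zero of_nat_Suc)
    show "eventually (\<lambda>n. dist (\<phi> n (k n)) L < e) U"
    proof (rule eventually_mono[OF ev_k[of "max N M"]])
      fix n assume n: "max N M \<le> k n \<and> good n (k n)"
      have "1 / (real (k n) + 1) \<le> 1 / (real M + 1)"
        using n by (intro divide_left_mono) auto
      hence "dist (\<phi> n (k n)) (\<psi> (k n)) < e / 2" using n M by (simp add: good_def)
      moreover have "dist (\<psi> (k n)) L < e / 2" using n N by simp
      ultimately show "dist (\<phi> n (k n)) L < e" using dist_triangle[of "\<phi> n (k n)" L "\<psi> (k n)"] by simp
    qed
  qed
  ultimately show ?thesis using that by blast
qed

section \<open>Power integrals on \<open>[0,1]\<close>\<close>

definition Lp_integral :: "real \<Rightarrow> (real \<Rightarrow> real) \<Rightarrow> real" where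
  "Lp_integral p f = (LINT x|I01. \<bar>f x\<bar> powr p)"

lemma Lp_integral_nonneg: "0 \<le> Lp_integral p f"
  unfolding Lp_integral_def by (rule integral_nonneg_AE) auto

lemma Lp_norm_eq_Lp_integral: "Lp_norm p f = Lp_integral p f powr (1 / p)"
  by (simp add: Lp_norm_def Lp_integral_def)

lemma Lp_integral_eq_Lp_norm: "0 < p \<Longrightarrow> Lp_integral p f = Lp_norm p f powr p"
  using Lp_integral_nonneg[of p f] by (simp add: Lp_norm_eq_Lp_integral powr_powr)

lemma Lp_integral_le_affine:
  assumes "integrable I01 (\<lambda>x. \<bar>f x\<bar> powr q)" "integrable I01 (\<lambda>x. \<bar>g x\<bar> powr p)"
    and "\<And>x. \<bar>f x\<bar> powr q \<le> a + b * \<bar>g x\<bar> powr p"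
  shows "Lp_integral q f \<le> a + b * Lp_integral p g"
proof -
  have "Lp_integral q f \<le> (LINT x|I01. a + b * \<bar>g x\<bar> powr p)"
    unfolding Lp_integral_def by (rule integral_mono) (use assms in auto)
  also have "\<dots> = a + b * Lp_integral p g"
    using assms(2) by (simp add: Lp_integral_def measure_restrict_space)
  finally show ?thesis .
qed

lemma powr_2_le_1_plus_powr: "2 \<le> p \<Longrightarrow> \<bar>x::real\<bar> powr 2 \<le> 1 + \<bar>x\<bar> powr p"
proof (cases "\<bar>x\<bar> \<le> 1")
  case True
  hence "\<bar>x\<bar> powr 2 \<le> 1" by (simp add: abs_square_le_1)
  thus ?thesis by (smt (verit) powr_ge_zero)
next
  case False
  assume "2 \<le> p"
  hence "\<bar>x\<bar> powr 2 \<le> \<bar>x\<bar> powr p" using False by (intro powr_mono) auto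
  thus ?thesis by simp
qed

lemma memLp_square_integrable:
  assumes "memLp p f" "2 \<le> p"
  shows "integrable I01 (\<lambda>x. \<bar>f x\<bar> powr 2)"
proof (rule Bochner_Integration.integrable_bound)
  show "integrable I01 (\<lambda>x. 1 + \<bar>f x\<bar> powr p)"
    using assms(1) by (simp add: memLp_def)
qed (use assms powr_2_le_1_plus_powr in \<open>auto simp: memLp_def\<close>)

lemma Lp_integral_2_le:
  assumes "memLp p f" "2 \<le> p"
  shows "Lp_integral 2 f \<le> 1 + Lp_integral p f"
  using Lp_integral_le_affine[where a = 1 and b = 1] powr_2_le_1_plus_powr[OF assms(2)]
    memLp_square_integrable[OF assms] assms(1)
  by (simp add: memLp_def)

lemma abs_diff_powr_le:
  assumes "0 < p"
  shows "\<bar>a - b\<bar> powr p \<le> 2 powr p * (\<bar>a\<bar> powr p + \<bar>b::real\<bar> powr p)"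
proof -
  have "\<bar>a - b\<bar> powr p \<le> (2 * max \<bar>a\<bar> \<bar>b\<bar>) powr p"
    by (rule powr_mono2) (use assms in auto)
  also have "\<dots> = 2 powr p * max \<bar>a\<bar> \<bar>b\<bar> powr p" by (simp add: powr_mult)
  also have "\<dots> \<le> 2 powr p * (\<bar>a\<bar> powr p + \<bar>b\<bar> powr p)"
    by (intro mult_left_mono) (auto simp: max_def)
  finally show ?thesis .
qed

lemma memLp_diff:
  assumes "memLp p f" "memLp p g" "0 < p"
  shows "memLp p (\<lambda>x. f x - g x)"
    and "Lp_integral p (\<lambda>x. f x - g x) \<le> 2 powr p * (Lp_integral p f + Lp_integral p g)"
proof -
  have m: "(\<lambda>x. f x - g x) \<in> borel_measurable I01"
    using assms by (intro borel_measurable_diff) (auto simp: memLp_def)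
  have i: "integrable I01 (\<lambda>x. \<bar>f x\<bar> powr p)" "integrable I01 (\<lambda>x. \<bar>g x\<bar> powr p)"
    using assms by (auto simp: memLp_def)
  hence bound: "integrable I01 (\<lambda>x. 2 powr p * (\<bar>f x\<bar> powr p + \<bar>g x\<bar> powr p))"
    by auto
  have i_diff: "integrable I01 (\<lambda>x. \<bar>f x - g x\<bar> powr p)"
    by (rule Bochner_Integration.integrable_bound[OF bound])
       (use m abs_diff_powr_le[OF assms(3)] in auto)
  thus "memLp p (\<lambda>x. f x - g x)" using m by (simp add: memLp_def)
  have "Lp_integral p (\<lambda>x. f x - g x) \<le> (LINT x|I01. 2 powr p * (\<bar>f x\<bar> powr p + \<bar>g x\<bar> powr p))"
    unfolding Lp_integral_def
    by (rule integral_mono[OF _ bound]) (use i_diff abs_diff_powr_le[OF assms(3)] in auto)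
  also have "\<dots> = 2 powr p * (Lp_integral p f + Lp_integral p g)"
    using i by (simp add: Lp_integral_def)
  finally show "Lp_integral p (\<lambda>x. f x - g x) \<le> 2 powr p * (Lp_integral p f + Lp_integral p g)" .
qed

lemma borel_measurable_trunc [measurable]:
  "f \<in> borel_measurable M \<Longrightarrow> trunc r f \<in> borel_measurable M"
  unfolding trunc_def
  by (rule measurable_If) (auto intro!: pred_intros_logic borel_measurable_abs pred_less_const)

lemma memLp_trunc:
  assumes "memLp p f" "0 < p"
  shows "memLp p (trunc r f)" "Lp_integral p (trunc r f) \<le> Lp_integral p f"
proof -
  have bound: "\<bar>trunc r f x\<bar> powr p \<le> \<bar>f x\<bar> powr p" for x
    using assms(2) by (simp add: trunc_def)
  have m: "trunc r f \<in> borel_measurable I01" using assms by (simp add: memLp_def borel_measurable_trunc)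
  have "integrable I01 (\<lambda>x. \<bar>trunc r f x\<bar> powr p)"
    by (rule Bochner_Integration.integrable_bound[where f = "\<lambda>x. \<bar>f x\<bar> powr p"])
       (use assms(1) m bound in \<open>auto simp: memLp_def\<close>)
  thus "memLp p (trunc r f)" using m by (simp add: memLp_def)
  thus "Lp_integral p (trunc r f) \<le> Lp_integral p f"
    using Lp_integral_le_affine[where a = 0 and b = 1] bound assms(1) by (simp add: memLp_def)
qed

text \<open>Truncations at two levels have nested supports, so the \<open>p\<close>-th power integrals subtract.\<close>
lemma Lp_integral_trunc_diff:
  assumes "memLp p f" "0 < p" "r \<le> s"
  shows "Lp_integral p (\<lambda>x. trunc r f x - trunc s f x) = Lp_integral p (trunc r f) - Lp_integral p (trunc s f)"
proof -
  have "\<bar>trunc r f x - trunc s f x\<bar> powr p = \<bar>trunc r f x\<bar> powr p - \<bar>trunc s f x\<bar> powr p" for x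
    using assms(3) by (auto simp: trunc_def)
  thus ?thesis
    using memLp_trunc(1)[OF assms(1,2)] by (simp add: Lp_integral_def memLp_def)
qed

lemma Lp_integral_trunc_antimono:
  assumes "memLp p f" "0 < p" "r \<le> s"
  shows "Lp_integral p (trunc s f) \<le> Lp_integral p (trunc r f)"
  using Lp_integral_trunc_diff[OF assms] Lp_integral_nonneg[of p] by (metis diff_ge_0_iff_ge)

lemma abs_trunc_square_le:
  assumes "0 < r" "2 < p"
  shows "\<bar>trunc r f x\<bar> powr 2 \<le> r powr (2 - p) * \<bar>trunc r f x\<bar> powr p"
proof (cases "r < \<bar>f x\<bar>")
  case True
  have "\<bar>f x\<bar> powr 2 = \<bar>f x\<bar> powr (2 - p) * \<bar>f x\<bar> powr p" by (simp flip: powr_add)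
  also have "\<dots> \<le> r powr (2 - p) * \<bar>f x\<bar> powr p"
    by (intro mult_right_mono powr_mono2') (use True assms in auto)
  finally show ?thesis using True by (simp add: trunc_def)
qed (simp add: trunc_def)

lemma abs_trunc_diff_powr_le:
  assumes "0 < r" "2 < p"
  shows "\<bar>trunc r f x - f x\<bar> powr p \<le> r powr (p - 2) * \<bar>f x\<bar> powr 2"
proof (cases "r < \<bar>f x\<bar>")
  case False
  have "\<bar>f x\<bar> powr p = \<bar>f x\<bar> powr (p - 2) * \<bar>f x\<bar> powr 2" by (metis powr_add diff_add_cancel)
  also have "\<dots> \<le> r powr (p - 2) * \<bar>f x\<bar> powr 2"
    by (intro mult_right_mono powr_mono2) (use False assms in auto)
  finally show ?thesis using False by (simp add: trunc_def)
qed (use assms in \<open>simp add: trunc_def\<close>)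

lemma square_le_split:
  assumes "0 < d" "2 < p"
  shows "\<bar>x::real\<bar> powr 2 \<le> d powr 2 + d powr (2 - p) * \<bar>x\<bar> powr p"
proof (cases "\<bar>x\<bar> \<le> d")
  case True
  hence "\<bar>x\<bar> powr 2 \<le> d powr 2" by (intro powr_mono2) auto
  thus ?thesis by (smt (verit) mult_nonneg_nonneg powr_ge_zero)
next
  case False
  have "\<bar>x\<bar> powr 2 = \<bar>x\<bar> powr (2 - p) * \<bar>x\<bar> powr p" by (simp flip: powr_add)
  also have "\<dots> \<le> d powr (2 - p) * \<bar>x\<bar> powr p"
    by (intro mult_right_mono powr_mono2') (use False assms in auto)
  finally show ?thesis by (smt (verit) powr_ge_zero)
qed

text \<open>With \<open>T = trunc r f\<close>: \<open>|g|\<^sup>2 \<le> 2|T - g|\<^sup>2 + 2|T|\<^sup>2\<close>, split \<open>|T - g|\<^sup>2\<close> at level \<open>d\<close>, and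
  \<open>|T|\<^sup>2 \<le> r\<^bsup>2-p\<^esup> |T|\<^sup>p\<close> since \<open>T\<close> vanishes where \<open>|f| \<le> r\<close>.\<close>
lemma Lp_integral_2_le_trunc:
  assumes f: "memLp p f" and g: "memLp p g" and p: "2 < p" and "0 < d" "0 < r"
  shows "Lp_integral 2 g \<le> 2 * d powr 2 + 2 * d powr (2 - p) * Lp_integral p (\<lambda>x. trunc r f x - g x)
           + 2 * r powr (2 - p) * Lp_integral p (trunc r f)"
proof -
  have t: "memLp p (trunc r f)" using memLp_trunc(1) f p by simp
  have D: "memLp p (\<lambda>x. trunc r f x - g x)" using memLp_diff(1)[OF t g] p by simp
  have iD: "integrable I01 (\<lambda>x. \<bar>trunc r f x - g x\<bar> powr 2)"
    and iT: "integrable I01 (\<lambda>x. \<bar>trunc r f x\<bar> powr 2)"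
    and ig: "integrable I01 (\<lambda>x. \<bar>g x\<bar> powr 2)"
    using memLp_square_integrable[OF D] memLp_square_integrable[OF t] memLp_square_integrable[OF g] p
    by auto
  have pw: "\<bar>g x\<bar> powr 2 \<le> 2 * \<bar>trunc r f x - g x\<bar> powr 2 + 2 * \<bar>trunc r f x\<bar> powr 2" for x
  proof -
    have "2 * (trunc r f x - g x)\<^sup>2 + 2 * (trunc r f x)\<^sup>2 - (g x)\<^sup>2 = (2 * trunc r f x - g x)\<^sup>2"
      by (simp add: power2_eq_square algebra_simps)
    hence "(g x)\<^sup>2 \<le> 2 * (trunc r f x - g x)\<^sup>2 + 2 * (trunc r f x)\<^sup>2"
      using zero_le_power2[of "2 * trunc r f x - g x"] by linarith
    thus ?thesis by simp
  qed
  have "Lp_integral 2 g \<le> (LINT x|I01. 2 * \<bar>trunc r f x - g x\<bar> powr 2 + 2 * \<bar>trunc r f x\<bar> powr 2)"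
    unfolding Lp_integral_def by (rule integral_mono[OF ig]) (use iD iT pw in auto)
  also have "\<dots> = 2 * Lp_integral 2 (\<lambda>x. trunc r f x - g x) + 2 * Lp_integral 2 (trunc r f)"
    using iD iT by (simp add: Lp_integral_def)
  also have "Lp_integral 2 (\<lambda>x. trunc r f x - g x)
               \<le> d powr 2 + d powr (2 - p) * Lp_integral p (\<lambda>x. trunc r f x - g x)"
    using D p by (intro Lp_integral_le_affine square_le_split memLp_square_integrable \<open>0 < d\<close>)
                 (auto simp: memLp_def)
  also have "Lp_integral 2 (trunc r f) \<le> r powr (2 - p) * Lp_integral p (trunc r f)"
    using Lp_integral_le_affine[where a = 0 and b = "r powr (2 - p)"] abs_trunc_square_le[OF \<open>0 < r\<close> p]
      memLp_square_integrable[OF t] t p by (simp add: memLp_def)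
  finally show ?thesis by (simp add: algebra_simps)
qed

lemma Lp_integral_trunc_diff_le:
  assumes f: "memLp p f" and p: "2 < p" and r: "0 < r"
  shows "Lp_integral p (\<lambda>x. trunc r f x - f x) \<le> r powr (p - 2) * Lp_integral 2 f"
proof -
  have "memLp p (\<lambda>x. trunc r f x - f x)"
    using memLp_diff(1)[OF memLp_trunc(1)[OF f] f] p by simp
  thus ?thesis
    using Lp_integral_le_affine[where a = 0 and b = "r powr (p - 2)"] abs_trunc_diff_powr_le[OF r p]
      memLp_square_integrable[OF f] p by (simp add: memLp_def)
qed

section \<open>Truncation in the ultrapower\<close>

lemma up_seq_Lp_integral_bound:
  assumes "up_seq p F" "0 < p"
  obtains C where "\<And>n. Lp_integral p (F n) \<le> C"
proof -
  obtain B where B: "\<And>n. norm (Lp_norm p (F n)) \<le> B"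
    using assms(1) unfolding up_seq_def bounded_iff by auto
  have "Lp_integral p (F n) \<le> B powr p" for n
    unfolding Lp_integral_eq_Lp_norm[OF assms(2)]
    by (rule powr_mono2) (use assms B[of n] in \<open>auto simp: Lp_norm_eq_Lp_integral\<close>)
  thus ?thesis using that by blast
qed

lemma abs_Lp_norm_le: "0 < p \<Longrightarrow> Lp_integral p f \<le> C \<Longrightarrow> \<bar>Lp_norm p f\<bar> \<le> C powr (1 / p)"
  using Lp_integral_nonneg[of p f] by (auto simp: Lp_norm_eq_Lp_integral intro!: powr_mono2)

lemma up_seqI:
  assumes "\<And>n. memLp p (F n)" "\<And>n. Lp_integral p (F n) \<le> C" "0 < p"
  shows "up_seq p F"
  using assms abs_Lp_norm_le[OF assms(3) assms(2)] unfolding up_seq_def bounded_iff by auto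

lemma up_dist_eqI:
  assumes "U \<noteq> bot" "0 < p" "((\<lambda>n. Lp_integral p (\<lambda>x. F n x - G n x)) \<longlongrightarrow> l) U"
  shows "up_dist p U F G = l powr (1 / p)"
proof -
  have "((\<lambda>n. Lp_norm p (\<lambda>x. F n x - G n x)) \<longlongrightarrow> l powr (1 / p)) U"
    unfolding Lp_norm_eq_Lp_integral
    by (rule tendsto_powr'[OF assms(3) tendsto_const]) (use assms(2) in \<open>auto simp: Lp_integral_nonneg\<close>)
  thus ?thesis unfolding up_dist_def using assms(1) by (simp add: tendsto_Lim)
qed

lemma tendsto_Lp_integral_up_dist:
  assumes U: "ultrafilter_nat U" and p: "0 < p" and bound: "\<And>n. Lp_integral p (\<lambda>x. F n x - G n x) \<le> C"
  shows "0 \<le> up_dist p U F G"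
    and "((\<lambda>n. Lp_integral p (\<lambda>x. F n x - G n x)) \<longlongrightarrow> up_dist p U F G powr p) U"
proof -
  have lim: "((\<lambda>n. Lp_norm p (\<lambda>x. F n x - G n x)) \<longlongrightarrow> up_dist p U F G) U"
    unfolding up_dist_def by (rule ultrafilter_nat_tendsto_Lim[OF U abs_Lp_norm_le[OF p bound]])
  show "0 \<le> up_dist p U F G"
    by (rule tendsto_lowerbound[OF lim]) (auto simp: Lp_norm_def ultrafilter_nat_neq_bot[OF U])
  have "((\<lambda>n. Lp_norm p (\<lambda>x. F n x - G n x) powr p) \<longlongrightarrow> up_dist p U F G powr p) U"
    by (rule tendsto_powr'[OF lim tendsto_const]) (use p in \<open>auto simp: Lp_norm_def\<close>)
  thus "((\<lambda>n. Lp_integral p (\<lambda>x. F n x - G n x)) \<longlongrightarrow> up_dist p U F G powr p) U"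
    by (simp add: Lp_integral_eq_Lp_norm[OF p])
qed

lemma in_M_iff_Lp_integral: "in_M U F \<longleftrightarrow> ((\<lambda>n. Lp_integral 2 (F n)) \<longlongrightarrow> 0) U"
  unfolding in_M_def Lp_norm_eq_Lp_integral
proof
  assume "((\<lambda>n. Lp_integral 2 (F n) powr (1 / 2)) \<longlongrightarrow> 0) U"
  hence "((\<lambda>n. (Lp_integral 2 (F n) powr (1 / 2)) powr 2) \<longlongrightarrow> 0) U"
    by (rule tendsto_zero_powrI[OF _ tendsto_const]) auto
  thus "((\<lambda>n. Lp_integral 2 (F n)) \<longlongrightarrow> 0) U"
    by (simp add: powr_powr Lp_integral_nonneg)
qed (rule tendsto_zero_powrI[OF _ tendsto_const], auto simp: Lp_integral_nonneg)

lemma R_rep_self_if_in_M: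
  assumes p: "2 < p" and U: "ultrafilter_nat U" and F: "up_seq p F" and M: "in_M U F"
  shows "R_rep p U F F"
proof -
  have F2: "((\<lambda>n. Lp_integral 2 (F n)) \<longlongrightarrow> 0) U" using M by (simp add: in_M_iff_Lp_integral)
  have zero: "up_dist p U (\<lambda>n. trunc r (F n)) F = 0" if r: "0 < r" for r
  proof -
    have "((\<lambda>n. Lp_integral p (\<lambda>x. trunc r (F n) x - F n x)) \<longlongrightarrow> 0) U"
    proof (rule tendsto_sandwich[OF _ _ tendsto_const])
      show "\<forall>\<^sub>F n in U. 0 \<le> Lp_integral p (\<lambda>x. trunc r (F n) x - F n x)"
        by (simp add: Lp_integral_nonneg)
      show "\<forall>\<^sub>F n in U. Lp_integral p (\<lambda>x. trunc r (F n) x - F n x) \<le> r powr (p - 2) * Lp_integral 2 (F n)"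
        using F p r by (simp add: Lp_integral_trunc_diff_le up_seq_def)
      show "((\<lambda>n. r powr (p - 2) * Lp_integral 2 (F n)) \<longlongrightarrow> 0) U"
        using tendsto_mult_right_zero[OF F2] by simp
    qed
    thus ?thesis using up_dist_eqI ultrafilter_nat_neq_bot[OF U] p by fastforce
  qed
  have "\<forall>\<^sub>F r in at_top. up_dist p U (\<lambda>n. trunc r (F n)) F = 0"
    using eventually_gt_at_top[of "0::real"] by (rule eventually_mono) (rule zero)
  hence "((\<lambda>r. up_dist p U (\<lambda>n. trunc r (F n)) F) \<longlongrightarrow> 0) at_top"
    by (rule tendsto_eventually)
  thus ?thesis using F by (simp add: R_rep_def)
qed

lemma Lp_integral_trunc_diff_bound:
  assumes F: "up_seq p F" and G: "up_seq p G" and p: "0 < p"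
  obtains B where "\<And>r n. Lp_integral p (\<lambda>x. trunc r (F n) x - G n x) \<le> B"
proof -
  have mF: "\<And>n. memLp p (F n)" and mG: "\<And>n. memLp p (G n)" using F G by (auto simp: up_seq_def)
  obtain C where C: "\<And>n. Lp_integral p (F n) \<le> C" using up_seq_Lp_integral_bound[OF F p] by blast
  obtain C' where C': "\<And>n. Lp_integral p (G n) \<le> C'" using up_seq_Lp_integral_bound[OF G p] by blast
  have "Lp_integral p (\<lambda>x. trunc r (F n) x - G n x) \<le> 2 powr p * (C + C')" for r n
  proof -
    have "Lp_integral p (trunc r (F n)) + Lp_integral p (G n) \<le> C + C'"
      using memLp_trunc(2)[OF mF p] C C' by (meson add_mono order_trans)
    hence "2 powr p * (Lp_integral p (trunc r (F n)) + Lp_integral p (G n)) \<le> 2 powr p * (C + C')"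
      by (intro mult_left_mono) auto
    thus ?thesis using memLp_diff(2)[OF memLp_trunc(1)[OF mF[of n] p] mG[of n] p, of r] by linarith
  qed
  thus ?thesis using that by blast
qed

lemma tendsto_Lim_Lp_integral_2:
  assumes "ultrafilter_nat U" "up_seq p G" "2 \<le> p"
  shows "((\<lambda>n. Lp_integral 2 (G n)) \<longlongrightarrow> Lim U (\<lambda>n. Lp_integral 2 (G n))) U"
proof -
  obtain C where C: "\<And>n. Lp_integral p (G n) \<le> C"
    using up_seq_Lp_integral_bound[OF assms(2)] assms(3) by fastforce
  show ?thesis
  proof (rule ultrafilter_nat_tendsto_Lim[OF assms(1)])
    show "\<bar>Lp_integral 2 (G n)\<bar> \<le> 1 + C" for n
      using Lp_integral_2_le[of p "G n"] Lp_integral_nonneg[of 2 "G n"] C[of n] assms(2,3)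
      by (simp add: up_seq_def)
  qed
qed

lemma Lim_Lp_integral_2_le:
  assumes p: "2 < p" and U: "ultrafilter_nat U" and F: "up_seq p F" and G: "up_seq p G"
    and C: "\<And>n. Lp_integral p (F n) \<le> C" and d: "0 < d" and r: "0 < r"
  shows "Lim U (\<lambda>n. Lp_integral 2 (G n))
           \<le> 2 * d powr 2 + 2 * d powr (2 - p) * up_dist p U (\<lambda>n. trunc r (F n)) G powr p
             + 2 * r powr (2 - p) * C"
proof (rule tendsto_le[OF ultrafilter_nat_neq_bot[OF U] _ tendsto_Lim_Lp_integral_2[OF U G]])
  have p0: "0 < p" using p by simp
  have mF: "\<And>n. memLp p (F n)" and mG: "\<And>n. memLp p (G n)" using F G by (auto simp: up_seq_def)
  obtain B where B: "\<And>r n. Lp_integral p (\<lambda>x. trunc r (F n) x - G n x) \<le> B"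
    using Lp_integral_trunc_diff_bound[OF F G p0] by metis
  show "((\<lambda>n. 2 * d powr 2 + 2 * d powr (2 - p) * Lp_integral p (\<lambda>x. trunc r (F n) x - G n x)
             + 2 * r powr (2 - p) * C)
         \<longlongrightarrow> 2 * d powr 2 + 2 * d powr (2 - p) * up_dist p U (\<lambda>n. trunc r (F n)) G powr p
             + 2 * r powr (2 - p) * C) U"
    by (intro tendsto_intros tendsto_Lp_integral_up_dist(2)[OF U p0 B])
  show "\<forall>\<^sub>F n in U. Lp_integral 2 (G n) \<le> 2 * d powr 2
          + 2 * d powr (2 - p) * Lp_integral p (\<lambda>x. trunc r (F n) x - G n x) + 2 * r powr (2 - p) * C"
  proof (rule always_eventually, rule allI)
    fix n
    have "Lp_integral p (trunc r (F n)) \<le> C"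
      using memLp_trunc(2)[OF mF p0] C by (rule order_trans)
    hence "2 * r powr (2 - p) * Lp_integral p (trunc r (F n)) \<le> 2 * r powr (2 - p) * C"
      by (intro mult_left_mono) auto
    thus "Lp_integral 2 (G n) \<le> 2 * d powr 2
            + 2 * d powr (2 - p) * Lp_integral p (\<lambda>x. trunc r (F n) x - G n x) + 2 * r powr (2 - p) * C"
      using Lp_integral_2_le_trunc[OF mF[of n] mG[of n] p d r] by linarith
  qed
qed (use p in simp)

lemma in_M_if_R_rep:
  assumes p: "2 < p" and U: "ultrafilter_nat U" and F: "up_seq p F" and R: "R_rep p U F G"
  shows "in_M U G"
proof -
  have p0: "0 < p" using p by simp
  have G: "up_seq p G" and \<delta>: "((\<lambda>r. up_dist p U (\<lambda>n. trunc r (F n)) G) \<longlongrightarrow> 0) at_top"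
    using R by (auto simp: R_rep_def)
  obtain C where C: "\<And>n. Lp_integral p (F n) \<le> C" using up_seq_Lp_integral_bound[OF F p0] by blast
  obtain B where B: "\<And>r n. Lp_integral p (\<lambda>x. trunc r (F n) x - G n x) \<le> B"
    using Lp_integral_trunc_diff_bound[OF F G p0] by metis
  define \<mu> where "\<mu> = Lim U (\<lambda>n. Lp_integral 2 (G n))"
  have \<mu>_le: "\<mu> \<le> 2 * d powr 2" if d: "0 < d" for d
  proof (rule tendsto_le[OF trivial_limit_at_top_linorder _ tendsto_const])
    have \<delta>p: "((\<lambda>r. up_dist p U (\<lambda>n. trunc r (F n)) G powr p) \<longlongrightarrow> 0) at_top"
      using tendsto_Lp_integral_up_dist(1)[OF U p0 B] p0
      by (intro tendsto_zero_powrI[OF \<delta> tendsto_const]) auto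
    have r_powr: "((\<lambda>r::real. r powr (2 - p)) \<longlongrightarrow> 0) at_top"
      using p by (intro tendsto_neg_powr filterlim_ident) auto
    show "((\<lambda>r. 2 * d powr 2 + 2 * d powr (2 - p) * up_dist p U (\<lambda>n. trunc r (F n)) G powr p
             + 2 * r powr (2 - p) * C) \<longlongrightarrow> 2 * d powr 2) at_top"
      using tendsto_add[OF tendsto_add[OF tendsto_const tendsto_mult_right_zero[OF \<delta>p]]
          tendsto_mult_left_zero[OF tendsto_mult_right_zero[OF r_powr]]]
      by simp
    show "\<forall>\<^sub>F r in at_top. \<mu> \<le> 2 * d powr 2 + 2 * d powr (2 - p) * up_dist p U (\<lambda>n. trunc r (F n)) G powr p
             + 2 * r powr (2 - p) * C"
      using eventually_gt_at_top[of "0::real"]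
      by (rule eventually_mono) (use Lim_Lp_integral_2_le[OF p U F G C d] in \<open>simp add: \<mu>_def\<close>)
  qed
  have "\<mu> \<le> 0"
  proof (rule field_le_epsilon)
    fix e :: real assume "0 < e"
    thus "\<mu> \<le> 0 + e" using \<mu>_le[of "sqrt (e / 2)"] by simp
  qed
  moreover have G2: "((\<lambda>n. Lp_integral 2 (G n)) \<longlongrightarrow> \<mu>) U"
    unfolding \<mu>_def using tendsto_Lim_Lp_integral_2[OF U G] p by simp
  moreover have "0 \<le> \<mu>"
    by (rule tendsto_lowerbound[OF G2]) (auto simp: Lp_integral_nonneg ultrafilter_nat_neq_bot[OF U])
  ultimately show ?thesis by (simp add: in_M_iff_Lp_integral)
qed

lemma R_rep_exists:
  assumes p: "0 < p" and U: "ultrafilter_nat U" and np: "nonprincipal U" and F: "up_seq p F"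
  shows "\<exists>G. R_rep p U F G"
proof -
  have mF: "\<And>n. memLp p (F n)" using F by (simp add: up_seq_def)
  obtain C where C: "\<And>n. Lp_integral p (F n) \<le> C" using up_seq_Lp_integral_bound[OF F p] by blast
  define \<phi> where "\<phi> n t = Lp_integral p (trunc t (F n))" for n t
  have \<phi>_le: "\<phi> n t \<le> C" for n t
    unfolding \<phi>_def using memLp_trunc(2)[OF mF p] C by (rule order_trans)
  define \<psi> where "\<psi> t = Lim U (\<lambda>n. \<phi> n t)" for t
  have \<phi>_\<psi>: "((\<lambda>n. \<phi> n t) \<longlongrightarrow> \<psi> t) U" for t
    unfolding \<psi>_def
    by (rule ultrafilter_nat_tendsto_Lim[OF U]) (use \<phi>_le in \<open>auto simp: \<phi>_def Lp_integral_nonneg\<close>)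
  have \<psi>_nonneg: "0 \<le> \<psi> t" for t
    by (rule tendsto_lowerbound[OF \<phi>_\<psi>]) (auto simp: \<phi>_def Lp_integral_nonneg ultrafilter_nat_neq_bot[OF U])
  have \<psi>_antimono: "\<psi> s \<le> \<psi> t" if "t \<le> s" for s t
    by (rule tendsto_le[OF ultrafilter_nat_neq_bot[OF U] \<phi>_\<psi> \<phi>_\<psi>])
       (use Lp_integral_trunc_antimono[OF mF p that] in \<open>simp add: \<phi>_def\<close>)
  define L where "L = Inf (range \<psi>)"
  have bdd: "bdd_below (range \<psi>)" using \<psi>_nonneg by (intro bdd_belowI2)
  have L_le: "L \<le> \<psi> t" for t unfolding L_def using bdd by (simp add: cInf_lower)
  have \<psi>_L: "(\<psi> \<longlongrightarrow> L) at_top"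
    unfolding L_def using \<psi>_antimono bdd by (rule antimono_tendsto_Inf_at_top)
  obtain k where k: "filterlim k at_top U" "((\<lambda>n. \<phi> n (real (k n))) \<longlongrightarrow> L) U"
    using filterlim_diagonal[OF nonprincipal_filterlim_at_top[OF np] \<phi>_\<psi>
        filterlim_compose[OF \<psi>_L filterlim_real_sequentially]]
    by blast
  define G where "G n = trunc (real (k n)) (F n)" for n
  have G: "up_seq p G"
    using memLp_trunc(1)[OF mF p] \<phi>_le by (intro up_seqI[OF _ _ p]) (auto simp: G_def \<phi>_def)
  have "up_dist p U (\<lambda>n. trunc r (F n)) G = (\<psi> r - L) powr (1 / p)" for r
  proof (rule up_dist_eqI[OF ultrafilter_nat_neq_bot[OF U] p])
    have "eventually (\<lambda>n. nat \<lceil>r\<rceil> \<le> k n) U" using k(1) filterlim_at_top by blast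
    hence "eventually (\<lambda>n. \<phi> n r - \<phi> n (real (k n)) = Lp_integral p (\<lambda>x. trunc r (F n) x - G n x)) U"
      by (rule eventually_mono) (simp add: G_def \<phi>_def Lp_integral_trunc_diff[OF mF p] le_nat_iff)
    thus "((\<lambda>n. Lp_integral p (\<lambda>x. trunc r (F n) x - G n x)) \<longlongrightarrow> \<psi> r - L) U"
      by (rule Lim_transform_eventually[OF tendsto_diff[OF \<phi>_\<psi> k(2)]])
  qed
  moreover have "((\<lambda>r. (\<psi> r - L) powr (1 / p)) \<longlongrightarrow> 0) at_top"
    using L_le p by (intro tendsto_zero_powrI[OF _ tendsto_const] LIM_zero \<psi>_L) auto
  ultimately show ?thesis using G unfolding R_rep_def by auto
qed

theorem lemma5p2:
  fixes p :: real and U :: "nat filter"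
  assumes "2 < p" and "ultrafilter_nat U" and "nonprincipal U"
  shows "(\<forall>F. up_seq p F \<longrightarrow>
            (\<exists>G. R_rep p U F G) \<and> (\<forall>G. R_rep p U F G \<longrightarrow> in_M U G))
       \<and> (\<forall>F. up_seq p F \<and> in_M U F \<longrightarrow> R_rep p U F F)"
  using R_rep_exists[of p U] in_M_if_R_rep[OF assms(1,2)] R_rep_self_if_in_M[OF assms(1,2)] assms
  by auto

end
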